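(* Let $G$ be a connected map-rich graph without loops all of whose vertices have odd degree. Let $\gamma$ be the dimension of the bicycle space of $G$ and $v=|V(G)|$. Then the maximum number $\alpha$ of pairwise non-adjacent vertices of $G$ satisfies $\alpha\le v-1-\gamma$. In particular, if $G$ is planar, then $\alpha\le v-z$, where $z$ is the number of zigzag paths in a planar realization of $G$.
   Context: A map is a triple $M=(C_M,v_M,f_M)$ where $C_M$ is a finite cubic graph (multiple edges allowed) and $v_M,f_M$ are disjoint perfect matchings whose union is a disjoint union of 4-cycles, the squares ($SQ(M)$). $a_M=E(C_M)\setminus(v_M\cup f_M)$; $z_M$ is the matching formed by the diagonals of the squares; $Q_M=C_M\cup z_M$. For a map $X$, $G_X$ has vertices the cycles of $v_X\cup a_X$ and edges the squares, each square joining the cycles containing its two $v_X$-edges. The dual is $D=(C_M,f_M,v_M)$, the phial $P=(Q_M\setminus v_M,z_M,f_M)$; $V,F,Z$ are the $GF(2)$-coboundary spaces of $G_M,G_D,G_P$ (subsets of $SQ(M)$), $V^\perp$ the cycle space of $G_M$. $M$ is rich if $V^\perp=F+Z$; $G$ is map-rich if $G\cong G_M$ for a rich map $M$. The bicycle space of a graph is the intersection of its cycle space and coboundary space. $\chi(M)=\#(v_M\cup a_M\text{-cycles})-|SQ(M)|+\#(f_M\cup a_M\text{-cycles})$; a planar map is one with $C_M$ connected and $\chi(M)=2$. For planar $G$, the number of zigzag paths of a planar realization is the number of cycles of $z_M\cup a_M$ (in $Q_M$) for a planar map $M$ with $G_M\cong G$ (equivalently, the number of Petrie walks of a plane embedding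 of $G$). *)

theory Defs
  imports Main "HOL.Vector_Spaces" "HOL-Library.Z2" "HOL-Library.Function_Algebras"
begin

text \<open>A multigraph is a triple (vertex set, edge set, endpoint map); an edge e has
  endpoint set ends e of cardinality 1 (a loop) or 2.\<close>

type_synonym ('v,'e) mgraph = "'v set \<times> 'e set \<times> ('e \<Rightarrow> 'v set)"

definition mgraph :: "('v,'e) mgraph \<Rightarrow> bool" where
  "mgraph G = (case G of (Vs, Es, ends) \<Rightarrow>
     finite Vs \<and> finite Es \<and> (\<forall>e\<in>Es. ends e \<subseteq> Vs \<and> (card (ends e) = 1 \<or> card (ends e) = 2)))"

definition gverts :: "('v,'e) mgraph \<Rightarrow> 'v set" where "gverts G = fst G"
definition gedges :: "('v,'e) mgraph \<Rightarrow> 'e set" where "gedges G = fst (snd G)"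
definition gends :: "('v,'e) mgraph \<Rightarrow> 'e \<Rightarrow> 'v set" where "gends G = snd (snd G)"

definition loopless :: "('v,'e) mgraph \<Rightarrow> bool" where
  "loopless G = (\<forall>e\<in>gedges G. card (gends G e) = 2)"

text \<open>Degree of u within an edge subset A (loops counted twice).\<close>
definition sub_degree :: "('v,'e) mgraph \<Rightarrow> 'e set \<Rightarrow> 'v \<Rightarrow> nat" where
  "sub_degree G A u = card {e\<in>A. u \<in> gends G e} + card {e\<in>A. gends G e = {u}}"

definition degree :: "('v,'e) mgraph \<Rightarrow> 'v \<Rightarrow> nat" where
  "degree G u = sub_degree G (gedges G) u"

definition adjacent :: "('v,'e) mgraph \<Rightarrow> 'v \<Rightarrow> 'v \<Rightarrow> bool" where
  "adjacent G u w = (\<exists>e\<in>gedges G. u \<in> gends G e \<and> w \<in> gends G e \<and> u \<noteq> w)"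

definition gconnected :: "('v,'e) mgraph \<Rightarrow> bool" where
  "gconnected G = (gverts G \<noteq> {} \<and>
     (\<forall>u\<in>gverts G. \<forall>w\<in>gverts G. (u, w) \<in> {(x, y). adjacent G x y}\<^sup>*))"

definition independent_set :: "('v,'e) mgraph \<Rightarrow> 'v set \<Rightarrow> bool" where
  "independent_set G S = (S \<subseteq> gverts G \<and> (\<forall>u\<in>S. \<forall>w\<in>S. \<not> adjacent G u w))"

definition independence_number :: "('v,'e) mgraph \<Rightarrow> nat" where
  "independence_number G = Max {card S | S. independent_set G S}"

definition mgraph_iso :: "('v,'e) mgraph \<Rightarrow> ('w,'d) mgraph \<Rightarrow> bool" where
  "mgraph_iso G H = (\<exists>\<phi> \<psi>. bij_betw \<phi> (gverts G) (gverts H) \<and> bij_betw \<psi> (gedges G) (gedges H)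
      \<and> (\<forall>e\<in>gedges G. gends H (\<psi> e) = \<phi> ` gends G e))"

definition coboundary :: "('v,'e) mgraph \<Rightarrow> 'v set \<Rightarrow> 'e set" where
  "coboundary G U = {e\<in>gedges G. gends G e \<inter> U \<noteq> {} \<and> gends G e - U \<noteq> {}}"

definition cut_space :: "('v,'e) mgraph \<Rightarrow> 'e set set" where
  "cut_space G = {coboundary G U | U. U \<subseteq> gverts G}"

definition cycle_space :: "('v,'e) mgraph \<Rightarrow> 'e set set" where
  "cycle_space G = {A. A \<subseteq> gedges G \<and> (\<forall>u\<in>gverts G. even (sub_degree G A u))}"

definition bicycle_space :: "('v,'e) mgraph \<Rightarrow> 'e set set" where
  "bicycle_space G = cycle_space G \<inter> cut_space G"

text \<open>Edge subsets are identified with vectors in GF(2)^E (type bit of HOL-Library.Z2);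
  dimension is the library's vector-space dimension.\<close>
definition bit_ind :: "'e set \<Rightarrow> 'e \<Rightarrow> bit" where
  "bit_ind A = (\<lambda>x. if x \<in> A then 1 else 0)"

definition gf2_dim :: "'e set set \<Rightarrow> nat" where
  "gf2_dim W = vector_space.dim (\<lambda>(c::bit) (g::'e \<Rightarrow> bit). (\<lambda>x. c * g x)) (bit_ind ` W)"

definition set_sum :: "'e set set \<Rightarrow> 'e set set \<Rightarrow> 'e set set" where
  "set_sum X Y = {(A - B) \<union> (B - A) | A B. A \<in> X \<and> B \<in> Y}"

text \<open>A map M = (C_M, v_M, f_M) is encoded by the vertex set W of the cubic graph C_M and the
  three perfect matchings v_M, f_M, a_M as fixed-point-free involutions of W
  (each vertex is matched to its partner).  Since C_M is cubic and v_M, f_M are disjoint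
  perfect matchings, a_M is also a perfect matching, and every vertex has exactly one
  incident edge of each class; hence this encoding is faithful (parallel edges of
  different classes are allowed).  The union v_M \<union> f_M being a disjoint union of 4-cycles
  means exactly that v and f commute and v x \<noteq> f x.\<close>

definition fpf_involution :: "'w set \<Rightarrow> ('w \<Rightarrow> 'w) \<Rightarrow> bool" where
  "fpf_involution W g = (\<forall>x\<in>W. g x \<in> W \<and> g x \<noteq> x \<and> g (g x) = x)"

definition is_map :: "'w set \<Rightarrow> ('w \<Rightarrow> 'w) \<Rightarrow> ('w \<Rightarrow> 'w) \<Rightarrow> ('w \<Rightarrow> 'w) \<Rightarrow> bool" where
  "is_map W v f a = (finite W \<and> fpf_involution W v \<and> fpf_involution W f \<and> fpf_involution W a
     \<and> (\<forall>x\<in>W. v (f x) = f (v x) \<and> v x \<noteq> f x))"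

text \<open>Vertex set of the component containing x of the 2-regular subgraph g \<union> h.\<close>
definition orb2 :: "('w \<Rightarrow> 'w) \<Rightarrow> ('w \<Rightarrow> 'w) \<Rightarrow> 'w \<Rightarrow> 'w set" where
  "orb2 g h x = {y. (x, y) \<in> ({(u, g u) | u. True} \<union> {(u, h u) | u. True})\<^sup>*}"

definition cycles2 :: "'w set \<Rightarrow> ('w \<Rightarrow> 'w) \<Rightarrow> ('w \<Rightarrow> 'w) \<Rightarrow> 'w set set" where
  "cycles2 W g h = orb2 g h ` W"

definition squares :: "'w set \<Rightarrow> ('w \<Rightarrow> 'w) \<Rightarrow> ('w \<Rightarrow> 'w) \<Rightarrow> 'w set set" where
  "squares W v f = cycles2 W v f"

text \<open>G_X for the map X=(W,v,f,a): vertices the cycles of v \<union> a, edges the squares; a square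
  joins the (v \<union> a)-cycles containing its two v-edges, i.e. the (v \<union> a)-cycles meeting it.\<close>
definition map_graph :: "'w set \<Rightarrow> ('w \<Rightarrow> 'w) \<Rightarrow> ('w \<Rightarrow> 'w) \<Rightarrow> ('w \<Rightarrow> 'w)
    \<Rightarrow> ('w set, 'w set) mgraph" where
  "map_graph W v f a = (cycles2 W v a, squares W v f, \<lambda>S. orb2 v a ` S)"

text \<open>z_M: diagonals of the squares, z x = v (f x).\<close>
definition diag :: "('w \<Rightarrow> 'w) \<Rightarrow> ('w \<Rightarrow> 'w) \<Rightarrow> 'w \<Rightarrow> 'w" where
  "diag v f = (\<lambda>x. v (f x))"

text \<open>V, F, Z: coboundary spaces of G_M, of G_D for the dual D=(C_M,f_M,v_M), and of G_P for
  the phial P=(Q_M - v_M, z_M, f_M) (whose a-matching is again a_M).\<close>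
definition Vsp where "Vsp W v f a = cut_space (map_graph W v f a)"
definition Fsp where "Fsp W v f a = cut_space (map_graph W f v a)"
definition Zsp where "Zsp W v f a = cut_space (map_graph W (diag v f) f a)"

definition rich_map :: "'w set \<Rightarrow> ('w \<Rightarrow> 'w) \<Rightarrow> ('w \<Rightarrow> 'w) \<Rightarrow> ('w \<Rightarrow> 'w) \<Rightarrow> bool" where
  "rich_map W v f a = (is_map W v f a \<and>
     cycle_space (map_graph W v f a) = set_sum (Fsp W v f a) (Zsp W v f a))"

text \<open>Map-rich: isomorphic to G_M for a rich map M (maps taken on carriers in nat; every finite
  map is isomorphic to one of these).\<close>
definition map_rich :: "('v,'e) mgraph \<Rightarrow> bool" where
  "map_rich G = (\<exists>(W::nat set) v f a. rich_map W v f a \<and> mgraph_iso G (map_graph W v f a))"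

definition map_connected :: "'w set \<Rightarrow> ('w \<Rightarrow> 'w) \<Rightarrow> ('w \<Rightarrow> 'w) \<Rightarrow> ('w \<Rightarrow> 'w) \<Rightarrow> bool" where
  "map_connected W v f a = (W \<noteq> {} \<and> (\<forall>x\<in>W. \<forall>y\<in>W.
     (x, y) \<in> ({(u, v u) | u. True} \<union> {(u, f u) | u. True} \<union> {(u, a u) | u. True})\<^sup>*))"

definition euler_char :: "'w set \<Rightarrow> ('w \<Rightarrow> 'w) \<Rightarrow> ('w \<Rightarrow> 'w) \<Rightarrow> ('w \<Rightarrow> 'w) \<Rightarrow> int" where
  "euler_char W v f a = int (card (cycles2 W v a)) - int (card (squares W v f))
     + int (card (cycles2 W f a))"

definition planar_map :: "'w set \<Rightarrow> ('w \<Rightarrow> 'w) \<Rightarrow> ('w \<Rightarrow> 'w) \<Rightarrow> ('w \<Rightarrow> 'w) \<Rightarrow> bool" where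
  "planar_map W v f a = (is_map W v f a \<and> map_connected W v f a \<and> euler_char W v f a = 2)"

definition zigzag_count :: "'w set \<Rightarrow> ('w \<Rightarrow> 'w) \<Rightarrow> ('w \<Rightarrow> 'w) \<Rightarrow> ('w \<Rightarrow> 'w) \<Rightarrow> nat" where
  "zigzag_count W v f a = card (cycles2 W (diag v f) a)"

end

theory Submission
  imports Defs "HOL-Library.Disjoint_Sets"
begin

text \<open>
  Over GF(2), adding to a bicycle the coboundary of a subset \<open>U\<close> of an independent set \<open>S\<close>
  of odd vertices is injective in the pair: the coboundary of a nonempty \<open>U\<close> has odd degree
  at the vertices of \<open>U\<close>, so it is never a cycle. All these sums are cuts, and a graph with
  \<open>v\<close> vertices has at most \<open>2^(v-1)\<close> cuts; hence \<open>2^(\<gamma> + |S|) \<le> 2^(v-1)\<close>.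

  For a planar map, say that a set \<open>X\<close> of flags crosses a square if it separates the ends of
  the square's \<open>v\<close>-edges, and dual-crosses it for the \<open>f\<close>-edges. For a union of zigzags both
  notions agree, and the crossed squares form a cycle of \<open>G_M\<close> and of the dual graph \<open>G_D\<close>.
  For a union of \<open>(v, a)\<close>-cycles, the dual-crossed squares form the coboundary of these
  vertices of \<open>G_M\<close>, again a cycle of \<open>G_D\<close>. Fixing one zigzag, the sums of the crossed
  squares of unions of the other zigzags and the coboundaries of subsets of \<open>S\<close> are
  \<open>2^(z-1+|S|)\<close> distinct cycles of \<open>G_D\<close>: as before, equal sums force equal subsets of \<open>S\<close>,
  and a union of zigzags crossing no square is closed under \<open>v\<close>, \<open>f\<close> and \<open>a\<close>, so it is empty
  or everything. The connected graph \<open>G_D\<close> has at most \<open>2^(e-f+1) = 2^(v-1)\<close> cycles by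
  Euler's formula, hence \<open>|S| \<le> v - z\<close>.
\<close>

section \<open>Parity and symmetric differences\<close>

lemma of_nat_bit_eq_0_iff: "(of_nat n :: bit) = 0 \<longleftrightarrow> even n"
  by (induction n) auto

lemma card_filter_eq_sum: "finite A \<Longrightarrow> card {x \<in> A. P x} = (\<Sum>x\<in>A. of_bool (P x))"
  by (simp add: Int_def)

lemma even_card_involution:
  assumes "\<And>x. x \<in> X \<Longrightarrow> h x \<in> X" "\<And>x. x \<in> X \<Longrightarrow> h (h x) = x"
    and "\<And>x. x \<in> X \<Longrightarrow> h x \<noteq> x"
  shows "even (card X)"
proof -
  have "(\<Sum>x\<in>X. 1 :: bit) = 0"
    by (rule sum_involution_eq_0[where h = h]) (use assms in auto)
  then show ?thesis by (simp add: of_nat_bit_eq_0_iff)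
qed

lemma even_card_sym_diff:
  assumes "finite A" "finite B"
  shows "even (card (sym_diff A B)) \<longleftrightarrow> (even (card A) \<longleftrightarrow> even (card B))"
proof -
  have "card (sym_diff A B) = card (A - B) + card (B - A)"
    using assms by (intro card_Un_disjoint) auto
  moreover have "card (A - B) = card A - card (A \<inter> B)" "card (B - A) = card B - card (A \<inter> B)"
    using assms by (simp_all add: card_Diff_subset_Int Int_commute)
  moreover have "card (A \<inter> B) \<le> card A" "card (A \<inter> B) \<le> card B"
    using assms by (simp_all add: card_mono)
  ultimately show ?thesis by presburger
qed

lemma even_card_filter_sym_diff:
  assumes "finite A" "finite B"
  shows "even (card {e \<in> sym_diff A B. P e})
    \<longleftrightarrow> (even (card {e \<in> A. P e}) \<longleftrightarrow> even (card {e \<in> B. P e}))"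
proof -
  have "{e \<in> sym_diff A B. P e} = sym_diff {e \<in> A. P e} {e \<in> B. P e}" by auto
  then show ?thesis using even_card_sym_diff[of "{e \<in> A. P e}" "{e \<in> B. P e}"] assms by simp
qed

lemma sym_diff_swap: "sym_diff A B = sym_diff C D \<Longrightarrow> sym_diff A C = sym_diff B D"
  by blast

section \<open>Cut space and cycle space of a multigraph\<close>

lemma mgraph_finite:
  assumes "mgraph G"
  shows "finite (gverts G)" "finite (gedges G)"
  using assms unfolding mgraph_def gverts_def gedges_def by (auto split: prod.splits)

lemma mgraphI:
  assumes "finite (gverts G)" "finite (gedges G)"
    and "\<And>e. e \<in> gedges G \<Longrightarrow> gends G e \<subseteq> gverts G \<and> (card (gends G e) = 1 \<or> card (gends G e) = 2)"
  shows "mgraph G"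
proof -
  obtain V E ends where G: "G = (V, E, ends)" by (rule prod_cases3)
  show ?thesis using assms unfolding G mgraph_def gverts_def gedges_def gends_def by simp
qed

lemma mgraph_ends:
  assumes "mgraph G" "e \<in> gedges G"
  shows "gends G e \<subseteq> gverts G" "card (gends G e) = 1 \<or> card (gends G e) = 2"
  using assms unfolding mgraph_def gends_def gedges_def gverts_def by (auto split: prod.splits)

lemma mgraph_endsE:
  assumes "mgraph G" "e \<in> gedges G"
  obtains p where "gends G e = {p}" | p q where "gends G e = {p, q}" "p \<noteq> q"
  using mgraph_ends(2)[OF assms] by (metis card_1_singletonE card_2_iff)

lemma coboundary_subset_edges: "coboundary G U \<subseteq> gedges G"
  unfolding coboundary_def by auto

lemma coboundary_empty [simp]: "coboundary G {} = {}"
  unfolding coboundary_def by auto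

lemma coboundary_sym_diff:
  assumes "mgraph G"
  shows "coboundary G (sym_diff U U') = sym_diff (coboundary G U) (coboundary G U')"
proof -
  have "e \<in> coboundary G (sym_diff U U') \<longleftrightarrow> e \<in> sym_diff (coboundary G U) (coboundary G U')" for e
  proof (cases "e \<in> gedges G")
    case True
    then show ?thesis by (rule mgraph_endsE[OF assms]) (use True in \<open>auto simp: coboundary_def\<close>)
  qed (simp add: coboundary_def)
  then show ?thesis by blast
qed

lemma coboundary_complement:
  assumes "mgraph G"
  shows "coboundary G (gverts G - U) = coboundary G U"
  using mgraph_ends(1)[OF assms] unfolding coboundary_def by blast

lemma empty_in_cut_space: "{} \<in> cut_space G"
  unfolding cut_space_def by (auto intro!: exI[of _ "{}"])

lemma sym_diff_in_cut_space:
  assumes "mgraph G" "A \<in> cut_space G" "B \<in> cut_space G"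
  shows "sym_diff A B \<in> cut_space G"
proof -
  obtain U U' where "A = coboundary G U" "B = coboundary G U'" "U \<subseteq> gverts G" "U' \<subseteq> gverts G"
    using assms(2,3) unfolding cut_space_def by auto
  then show ?thesis
    unfolding cut_space_def using coboundary_sym_diff[OF assms(1), of U U'] by blast
qed

lemma finite_cut_space: "mgraph G \<Longrightarrow> finite (cut_space G)"
  by (rule finite_subset[of _ "Pow (gedges G)"])
    (auto simp: cut_space_def coboundary_def dest: mgraph_finite(2))

text \<open>By complementation, every cut is the coboundary of a vertex set avoiding \<open>w\<close>.\<close>
lemma card_cut_space_le:
  assumes "mgraph G" "w \<in> gverts G"
  shows "card (cut_space G) \<le> 2 ^ (card (gverts G) - 1)"
proof -
  have fin: "finite (gverts G)" using mgraph_finite[OF assms(1)] by simp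
  have "cut_space G \<subseteq> coboundary G ` Pow (gverts G - {w})"
  proof
    fix A assume "A \<in> cut_space G"
    then obtain U where U: "A = coboundary G U" "U \<subseteq> gverts G" unfolding cut_space_def by auto
    then have "A = coboundary G (gverts G - U)" using coboundary_complement[OF assms(1)] by simp
    with U show "A \<in> coboundary G ` Pow (gverts G - {w})" by (cases "w \<in> U") auto
  qed
  then have "card (cut_space G) \<le> card (coboundary G ` Pow (gverts G - {w}))"
    using fin by (intro card_mono) auto
  also have "\<dots> \<le> card (Pow (gverts G - {w}))" using fin by (intro card_image_le) auto
  also have "\<dots> = 2 ^ (card (gverts G) - 1)" using fin assms(2) by (simp add: card_Pow)
  finally show ?thesis .
qed

lemma empty_in_cycle_space: "{} \<in> cycle_space G"
  unfolding cycle_space_def sub_degree_def by simp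

lemma sym_diff_in_cycle_space:
  assumes "mgraph G" "A \<in> cycle_space G" "B \<in> cycle_space G"
  shows "sym_diff A B \<in> cycle_space G"
proof -
  have "finite A" "finite B"
    using assms mgraph_finite(2)[OF assms(1)] unfolding cycle_space_def by (auto intro: finite_subset)
  then show ?thesis
    using assms(2,3) even_card_filter_sym_diff unfolding cycle_space_def sub_degree_def by auto
qed

lemma finite_cycle_space: "mgraph G \<Longrightarrow> finite (cycle_space G)"
  by (rule finite_subset[of _ "Pow (gedges G)"]) (auto simp: cycle_space_def dest: mgraph_finite(2))

lemma sub_degree_coboundary_independent:
  assumes "loopless G" "independent_set G S" "U \<subseteq> S" "s \<in> U"
  shows "sub_degree G (coboundary G U) s = degree G s"
proof -
  have two: "\<exists>p q. gends G e = {p, q} \<and> p \<noteq> q" if "e \<in> gedges G" for e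
    using assms(1) that unfolding loopless_def by (meson card_2_iff)
  have ends: "{e \<in> coboundary G U. s \<in> gends G e} = {e \<in> gedges G. s \<in> gends G e}"
  proof (auto simp: coboundary_def)
    fix e assume e: "e \<in> gedges G" "s \<in> gends G e" "gends G e \<subseteq> U"
    then obtain p q where "gends G e = {p, q}" "p \<noteq> q" using two by blast
    then have "adjacent G p q" "p \<in> S" "q \<in> S" using e assms(3) unfolding adjacent_def by auto
    then show False using assms(2) unfolding independent_set_def by blast
  qed (use assms(4) in auto)
  have no_loops: "{e \<in> A. gends G e = {s}} = {}" if "A \<subseteq> gedges G" for A
    using assms(1) that unfolding loopless_def by force
  show ?thesis
    unfolding degree_def sub_degree_def ends
    by (simp only: no_loops[OF coboundary_subset_edges] no_loops[OF order_refl])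
qed

lemma coboundary_odd_independent_in_cycle_space:
  assumes "loopless G" "independent_set G S" "\<forall>u\<in>S. odd (degree G u)" "U \<subseteq> S"
    and "coboundary G U \<in> cycle_space G"
  shows "U = {}"
proof (rule ccontr)
  assume "U \<noteq> {}"
  then obtain s where s: "s \<in> U" by auto
  then have "s \<in> gverts G" using assms(2,4) unfolding independent_set_def by auto
  then have "even (sub_degree G (coboundary G U) s)" using assms(5) unfolding cycle_space_def by auto
  then show False using sub_degree_coboundary_independent[OF assms(1,2,4) s] assms(3,4) s by auto
qed

lemma maximum_independent_set_exists:
  assumes "mgraph G"
  obtains S where "independent_set G S" "card S = independence_number G"
proof -
  have fin: "finite (gverts G)" using mgraph_finite[OF assms] by simp
  let ?K = "{card S | S. independent_set G S}"
  have "?K \<subseteq> {..card (gverts G)}"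
    using card_mono[OF fin] unfolding independent_set_def by auto
  then have "finite ?K" by (rule finite_subset) simp
  moreover have "independent_set G {}" unfolding independent_set_def by simp
  ultimately have "Max ?K \<in> ?K" by (intro Max_in) auto
  then show ?thesis using that unfolding independence_number_def by auto
qed

section \<open>Spanning forests\<close>

definition parent_edges :: "('v, 'e) mgraph \<Rightarrow> 'v \<Rightarrow> ('v \<Rightarrow> nat) \<Rightarrow> ('v \<Rightarrow> 'e) \<Rightarrow> bool" where
  "parent_edges H r d p \<longleftrightarrow> (\<forall>u\<in>gverts H - {r}.
     p u \<in> gedges H \<and> u \<in> gends H (p u) \<and> (\<exists>w\<in>gends H (p u). d w + 1 = d u))"

lemma parent_edge_other_end:
  assumes "mgraph H" "parent_edges H r d p"
    and "u' \<in> gverts H - {r}" "u \<noteq> u'" "u \<in> gends H (p u')"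
  shows "d u + 1 = d u'"
proof -
  obtain w where w: "w \<in> gends H (p u')" "d w + 1 = d u'" "u' \<in> gends H (p u')" "p u' \<in> gedges H"
    using assms(2,3) unfolding parent_edges_def by blast
  then have "w \<noteq> u'" by auto
  show ?thesis
    by (rule mgraph_endsE[OF assms(1) w(4)]) (use w \<open>w \<noteq> u'\<close> assms(4,5) in auto)
qed

lemma inj_on_parent_edges:
  assumes "mgraph H" "parent_edges H r d p"
  shows "inj_on p (gverts H - {r})"
proof (rule inj_onI, rule ccontr)
  fix u u' assume u: "u \<in> gverts H - {r}" and u': "u' \<in> gverts H - {r}"
    and eq: "p u = p u'" and ne: "u \<noteq> u'"
  have "u \<in> gends H (p u')" "u' \<in> gends H (p u)"
    using assms(2) u u' eq unfolding parent_edges_def by metis+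
  then have "d u + 1 = d u'" "d u' + 1 = d u"
    using parent_edge_other_end[OF assms] u u' ne by simp_all
  then show False by simp
qed

text \<open>In a nonempty cycle inside the parent edges, a vertex maximising \<open>d\<close> among the children
  of its edges would have degree one.\<close>
lemma parent_edges_acyclic:
  assumes mg: "mgraph H" and par: "parent_edges H r d p"
    and A: "A \<in> cycle_space H" "A \<subseteq> p ` (gverts H - {r})"
  shows "A = {}"
proof (rule ccontr)
  assume "A \<noteq> {}"
  define U where "U = {u \<in> gverts H - {r}. p u \<in> A}"
  have "finite U" unfolding U_def using mgraph_finite(1)[OF mg] by simp
  moreover have "U \<noteq> {}" using \<open>A \<noteq> {}\<close> A(2) unfolding U_def by auto
  ultimately have "Max (d ` U) \<in> d ` U" by (intro Max_in) auto
  then obtain u where u: "u \<in> U" "d u = Max (d ` U)" by auto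
  have u_max: "d u' \<le> d u" if "u' \<in> U" for u'
    using u(2) \<open>finite U\<close> that by simp
  have uV: "u \<in> gverts H - {r}" using u(1) unfolding U_def by auto
  have at_u: "{e \<in> A. u \<in> gends H e} = {p u}"
  proof
    show "{e \<in> A. u \<in> gends H e} \<subseteq> {p u}"
    proof
      fix e assume e: "e \<in> {e \<in> A. u \<in> gends H e}"
      then obtain u' where u': "u' \<in> gverts H - {r}" "e = p u'" using A(2) by auto
      then have "u' \<in> U" using e unfolding U_def by auto
      then have "\<not> d u + 1 = d u'" using u_max by fastforce
      then show "e \<in> {p u}" using parent_edge_other_end[OF mg par u'(1), of u] e u' by auto
    qed
  qed (use u(1) par uV in \<open>auto simp: U_def parent_edges_def\<close>)
  obtain w where "w \<in> gends H (p u)" "d w + 1 = d u" using par uV unfolding parent_edges_def by blast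
  then have "gends H (p u) \<noteq> {u}" by auto
  then have "{e \<in> A. gends H e = {u}} \<subseteq> {e \<in> A. u \<in> gends H e} - {p u}" by auto
  then have no_loop: "{e \<in> A. gends H e = {u}} = {}" unfolding at_u by blast
  have "sub_degree H A u = 1" unfolding sub_degree_def at_u no_loop by simp
  moreover have "even (sub_degree H A u)" using A(1) uV unfolding cycle_space_def by auto
  ultimately show False by simp
qed

lemma parent_edges_exist:
  assumes "gconnected H" "r \<in> gverts H"
  obtains d p where "parent_edges H r d p"
proof -
  define R where "R = {(x, y). adjacent H x y}"
  define d where "d u = (LEAST n. (r, u) \<in> R ^^ n)" for u
  have d_le: "d u \<le> n" if "(r, u) \<in> R ^^ n" for u n
    unfolding d_def using that by (rule Least_le)
  have d_path: "(r, u) \<in> R ^^ d u" if "(r, u) \<in> R ^^ n" for u n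
    unfolding d_def using that by (rule LeastI)
  have "\<forall>u\<in>gverts H - {r}. \<exists>e. e \<in> gedges H \<and> u \<in> gends H e \<and> (\<exists>w\<in>gends H e. d w + 1 = d u)"
  proof
    fix u assume u: "u \<in> gverts H - {r}"
    have "(r, u) \<in> R\<^sup>*" using assms u unfolding gconnected_def R_def by auto
    then obtain n where "(r, u) \<in> R ^^ n" using rtrancl_power by blast
    then have path: "(r, u) \<in> R ^^ d u" by (rule d_path)
    with u obtain m where m: "d u = Suc m" by (cases "d u") auto
    with path obtain w where w: "(r, w) \<in> R ^^ m" "(w, u) \<in> R" by auto
    then have "(r, u) \<in> R ^^ Suc (d w)" using d_path[OF w(1)] by auto
    then have "d w + 1 = d u" using d_le[OF w(1)] d_le[of u "Suc (d w)"] m by simp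
    with w(2) show "\<exists>e. e \<in> gedges H \<and> u \<in> gends H e \<and> (\<exists>w\<in>gends H e. d w + 1 = d u)"
      unfolding R_def adjacent_def by auto
  qed
  from bchoice[OF this] obtain p where "parent_edges H r d p"
    unfolding parent_edges_def by blast
  then show ?thesis by (rule that)
qed

lemma card_cycle_space_le_acyclic:
  assumes "mgraph H" "T \<subseteq> gedges H" "\<And>A. A \<in> cycle_space H \<Longrightarrow> A \<subseteq> T \<Longrightarrow> A = {}"
  shows "card (cycle_space H) \<le> 2 ^ (card (gedges H) - card T)"
proof -
  have finE: "finite (gedges H)" by (rule mgraph_finite(2)[OF assms(1)])
  have "inj_on (\<lambda>A. A - T) (cycle_space H)"
  proof (rule inj_onI)
    fix A B assume "A \<in> cycle_space H" "B \<in> cycle_space H" "A - T = B - T"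
    then have "sym_diff A B \<in> cycle_space H" "sym_diff A B \<subseteq> T"
      using sym_diff_in_cycle_space[OF assms(1)] by blast+
    then show "A = B" using assms(3) by blast
  qed
  then have "card (cycle_space H) = card ((\<lambda>A. A - T) ` cycle_space H)" by (simp add: card_image)
  also have "\<dots> \<le> card (Pow (gedges H - T))"
    using finE by (intro card_mono) (auto simp: cycle_space_def)
  also have "\<dots> = 2 ^ (card (gedges H) - card T)"
    using finE assms(2) by (simp add: card_Pow card_Diff_subset finite_subset)
  finally show ?thesis .
qed

lemma card_cycle_space_le:
  assumes "mgraph H" "gconnected H"
  shows "card (cycle_space H) \<le> 2 ^ (card (gedges H) - (card (gverts H) - 1))"
proof -
  obtain r where r: "r \<in> gverts H" using assms(2) unfolding gconnected_def by auto
  obtain d p where par: "parent_edges H r d p" using parent_edges_exist[OF assms(2) r] .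
  have "card (p ` (gverts H - {r})) = card (gverts H) - 1"
    using card_image[OF inj_on_parent_edges[OF assms(1) par]] r by simp
  moreover have "card (cycle_space H) \<le> 2 ^ (card (gedges H) - card (p ` (gverts H - {r})))"
    using par parent_edges_acyclic[OF assms(1) par]
    by (intro card_cycle_space_le_acyclic[OF assms(1)]) (auto simp: parent_edges_def)
  ultimately show ?thesis by simp
qed

section \<open>Dimension over GF(2)\<close>

interpretation gf2: vector_space "\<lambda>(c::bit) (g::'e \<Rightarrow> bit) x. c * g x"
  by unfold_locales (auto simp: fun_eq_iff algebra_simps)

text \<open>Otherwise the simplifier rewrites the scalar multiplication of \<open>gf2\<close> into a
  conditional, after which the facts of the interpretation no longer apply.\<close>
declare mult_bit_eq_and [simp del]

lemma bit_fun_add_self [simp]: "(g :: 'e \<Rightarrow> bit) + g = 0"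
  by (simp add: fun_eq_iff)

lemma bit_ind_sym_diff: "bit_ind (sym_diff A B) = bit_ind A + bit_ind B"
  by (auto simp: fun_eq_iff bit_ind_def)

lemma gf2_sum_inj_on_Pow:
  assumes "gf2.independent B" "finite B"
  shows "inj_on (sum id) (Pow B)"
proof (rule inj_onI)
  fix A A' assume A: "A \<in> Pow B" and A': "A' \<in> Pow B" and eq: "sum id A = sum id A'"
  then have fin: "finite A" "finite A'" using assms(2) finite_subset by auto
  have "sum id (sym_diff A A') = sum id (A - A') + sum id (A' - A)"
    using fin by (intro sum.union_disjoint) auto
  also have "\<dots> = sum id A + sum id A'"
    using fin sum.Int_Diff[of A id A'] sum.Int_Diff[of A' id A] by (simp add: Int_commute algebra_simps)
  also have "\<dots> = 0" using eq by simp
  finally have "(\<Sum>x\<in>sym_diff A A'. (\<lambda>y. 1 * x y)) = 0" by (simp add: id_def)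
  then have "sym_diff A A' = {}"
    using gf2.independentD[OF assms(1), of "sym_diff A A'" "\<lambda>_. 1"] fin A A' by auto
  then show "A = A'" by blast
qed

lemma gf2_subspace_bit_ind:
  assumes "{} \<in> \<F>" "\<And>A B. A \<in> \<F> \<Longrightarrow> B \<in> \<F> \<Longrightarrow> sym_diff A B \<in> \<F>"
  shows "gf2.subspace (bit_ind ` \<F>)"
proof (rule gf2.subspaceI)
  have "bit_ind {} = 0" by (simp add: fun_eq_iff bit_ind_def)
  then show "0 \<in> bit_ind ` \<F>" using assms(1) by force
  show "x + y \<in> bit_ind ` \<F>" if "x \<in> bit_ind ` \<F>" "y \<in> bit_ind ` \<F>" for x y
    using that assms(2) by (auto simp flip: bit_ind_sym_diff)
  show "(\<lambda>y. c * x y) \<in> bit_ind ` \<F>" if "x \<in> bit_ind ` \<F>" for c x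
    by (cases "c = 0") (use that \<open>0 \<in> bit_ind ` \<F>\<close> in \<open>auto simp: zero_fun_def\<close>)
qed

lemma two_pow_gf2_dim_le_card:
  assumes "finite \<F>" "{} \<in> \<F>" "\<And>A B. A \<in> \<F> \<Longrightarrow> B \<in> \<F> \<Longrightarrow> sym_diff A B \<in> \<F>"
  shows "2 ^ gf2_dim \<F> \<le> card \<F>"
proof -
  obtain B where B: "B \<subseteq> bit_ind ` \<F>" "gf2.independent B" "card B = gf2_dim \<F>"
    using gf2.basis_exists[of "bit_ind ` \<F>"] unfolding gf2_dim_def by metis
  have fin: "finite B" using B(1) assms(1) finite_subset by blast
  have "sum id ` Pow B \<subseteq> gf2.span B" by (auto intro: gf2.span_sum gf2.span_base)
  also have "\<dots> \<subseteq> bit_ind ` \<F>" by (rule gf2.span_minimal[OF B(1) gf2_subspace_bit_ind[OF assms(2,3)]])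
  finally have "card (sum id ` Pow B) \<le> card (bit_ind ` \<F>)" using assms(1) by (intro card_mono) auto
  also have "\<dots> \<le> card \<F>" using assms(1) by (rule card_image_le)
  finally show ?thesis
    using card_image[OF gf2_sum_inj_on_Pow[OF B(2) fin]] B(3) fin by (simp add: card_Pow)
qed

section \<open>The bicycle bound\<close>

lemma bicycle_space_subspace:
  assumes "mgraph G"
  shows "finite (bicycle_space G)" "{} \<in> bicycle_space G"
    and "\<And>A B. A \<in> bicycle_space G \<Longrightarrow> B \<in> bicycle_space G \<Longrightarrow> sym_diff A B \<in> bicycle_space G"
proof -
  show "finite (bicycle_space G)" using finite_cycle_space[OF assms] unfolding bicycle_space_def by simp
  show "{} \<in> bicycle_space G"
    using empty_in_cycle_space[of G] empty_in_cut_space[of G] unfolding bicycle_space_def by simp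
  show "sym_diff A B \<in> bicycle_space G" if "A \<in> bicycle_space G" "B \<in> bicycle_space G" for A B
    using that sym_diff_in_cycle_space[OF assms] sym_diff_in_cut_space[OF assms]
    unfolding bicycle_space_def by simp
qed

lemma card_bicycle_space_mult_le:
  assumes mg: "mgraph G" and "loopless G" "independent_set G S" "\<forall>u\<in>S. odd (degree G u)"
  shows "card (bicycle_space G) * 2 ^ card S \<le> card (cut_space G)"
proof -
  let ?B = "bicycle_space G"
  have finS: "finite S"
    using assms(3) mgraph_finite(1)[OF mg] finite_subset unfolding independent_set_def by blast
  define h where "h = (\<lambda>(A, U). sym_diff A (coboundary G U))"
  have inj: "inj_on h (?B \<times> Pow S)"
  proof (rule inj_onI, clarify)
    fix A U A' U' assume A: "A \<in> ?B" "A' \<in> ?B" and U: "U \<subseteq> S" "U' \<subseteq> S"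
      and eq: "h (A, U) = h (A', U')"
    then have "sym_diff A (coboundary G U) = sym_diff A' (coboundary G U')"
      unfolding h_def by simp
    then have swapped: "sym_diff A A' = sym_diff (coboundary G U) (coboundary G U')"
      by (rule sym_diff_swap)
    then have "sym_diff A A' = coboundary G (sym_diff U U')"
      by (simp only: coboundary_sym_diff[OF mg])
    moreover have "sym_diff A A' \<in> cycle_space G"
      using bicycle_space_subspace(3)[OF mg A] unfolding bicycle_space_def by simp
    ultimately have "coboundary G (sym_diff U U') \<in> cycle_space G" by simp
    moreover have "sym_diff U U' \<subseteq> S" using U by blast
    ultimately have "sym_diff U U' = {}"
      by (intro coboundary_odd_independent_in_cycle_space[OF assms(2-4)])
    then have "U = U'" by blast
    with swapped have "sym_diff A A' = {}" by simp
    with \<open>U = U'\<close> show "A = A' \<and> U = U'" by blast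
  qed
  have img: "h ` (?B \<times> Pow S) \<subseteq> cut_space G"
  proof clarify
    fix A U assume "A \<in> ?B" "U \<subseteq> S"
    moreover have "coboundary G U \<in> cut_space G"
      using \<open>U \<subseteq> S\<close> assms(3) unfolding cut_space_def independent_set_def by auto
    ultimately show "h (A, U) \<in> cut_space G"
      unfolding h_def bicycle_space_def using sym_diff_in_cut_space[OF mg] by auto
  qed
  have "card (?B) * 2 ^ card S = card (?B \<times> Pow S)"
    using finS bicycle_space_subspace(1)[OF mg] by (simp add: card_cartesian_product card_Pow)
  also have "\<dots> = card (h ` (?B \<times> Pow S))" using card_image[OF inj] by simp
  also have "\<dots> \<le> card (cut_space G)" using card_mono[OF finite_cut_space[OF mg] img] .
  finally show ?thesis .
qed

theorem independence_number_bicycle_bound: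
  assumes "mgraph G" "gverts G \<noteq> {}" "loopless G" "\<forall>u\<in>gverts G. odd (degree G u)"
  shows "independence_number G + gf2_dim (bicycle_space G) + 1 \<le> card (gverts G)"
proof -
  obtain S where S: "independent_set G S" "card S = independence_number G"
    using maximum_independent_set_exists[OF assms(1)] .
  obtain w where w: "w \<in> gverts G" using assms(2) by auto
  have "2 ^ (gf2_dim (bicycle_space G) + card S) \<le> card (bicycle_space G) * 2 ^ card S"
    using two_pow_gf2_dim_le_card[OF bicycle_space_subspace[OF assms(1)]] by (simp add: power_add)
  also have "\<dots> \<le> card (cut_space G)"
    using S(1) assms(4) by (intro card_bicycle_space_mult_le[OF assms(1,3)])
      (auto simp: independent_set_def)
  also have "\<dots> \<le> 2 ^ (card (gverts G) - 1)" by (rule card_cut_space_le[OF assms(1) w])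
  finally have "gf2_dim (bicycle_space G) + card S \<le> card (gverts G) - 1" by simp
  moreover have "card (gverts G) \<noteq> 0" using mgraph_finite(1)[OF assms(1)] w by auto
  ultimately show ?thesis using S(2) by linarith
qed

section \<open>Isomorphism invariance\<close>

locale mgraph_isomorphism =
  fixes G :: "('v, 'e) mgraph" and H :: "('w, 'd) mgraph" and \<phi> :: "'v \<Rightarrow> 'w" and \<psi> :: "'e \<Rightarrow> 'd"
  assumes mgraph: "mgraph G"
    and bij_verts: "bij_betw \<phi> (gverts G) (gverts H)"
    and bij_edges: "bij_betw \<psi> (gedges G) (gedges H)"
    and ends: "\<And>e. e \<in> gedges G \<Longrightarrow> gends H (\<psi> e) = \<phi> ` gends G e"
begin

lemma inj_on_verts: "inj_on \<phi> (gverts G)"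
  using bij_verts unfolding bij_betw_def by simp

lemma inj_on_ends: "e \<in> gedges G \<Longrightarrow> inj_on \<phi> (gends G e)"
  using inj_on_verts mgraph_ends(1)[OF mgraph] by (blast intro: inj_on_subset)

lemma image_mem_ends_iff: "u \<in> gverts G \<Longrightarrow> e \<in> gedges G \<Longrightarrow> \<phi> u \<in> \<phi> ` gends G e \<longleftrightarrow> u \<in> gends G e"
  using inj_on_image_mem_iff[OF inj_on_verts] mgraph_ends(1)[OF mgraph] by blast

lemma edge_of_image:
  assumes "d \<in> gedges H"
  obtains e where "e \<in> gedges G" "d = \<psi> e" "gends H d = \<phi> ` gends G e"
proof -
  from assms bij_edges obtain e where "e \<in> gedges G" "d = \<psi> e" unfolding bij_betw_def by blast
  with ends that show thesis by blast
qed

lemma card_edges_with: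
  "card {d \<in> gedges H. P (gends H d)} = card {e \<in> gedges G. P (\<phi> ` gends G e)}"
proof -
  have "{d \<in> gedges H. P (gends H d)} = \<psi> ` {e \<in> gedges G. P (\<phi> ` gends G e)}"
  proof (intro equalityI subsetI)
    fix d assume "d \<in> {d \<in> gedges H. P (gends H d)}"
    then show "d \<in> \<psi> ` {e \<in> gedges G. P (\<phi> ` gends G e)}"
      by (auto elim: edge_of_image)
  qed (use bij_edges ends in \<open>auto simp: bij_betw_def\<close>)
  moreover have "inj_on \<psi> {e \<in> gedges G. P (\<phi> ` gends G e)}"
    using bij_edges unfolding bij_betw_def by (auto intro: inj_on_subset)
  ultimately show ?thesis by (simp add: card_image)
qed

lemma degree_image:
  assumes "u \<in> gverts G"
  shows "degree H (\<phi> u) = degree G u"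
proof -
  have "(\<phi> u \<in> \<phi> ` gends G e) = (u \<in> gends G e)" "(\<phi> ` gends G e = {\<phi> u}) = (gends G e = {u})"
    if "e \<in> gedges G" for e
    using image_mem_ends_iff[OF assms that]
      inj_on_image_eq_iff[OF inj_on_verts, of "gends G e" "{u}"] mgraph_ends(1)[OF mgraph that] assms
    by auto
  then have "{e \<in> gedges G. \<phi> u \<in> \<phi> ` gends G e} = {e \<in> gedges G. u \<in> gends G e}"
    "{e \<in> gedges G. \<phi> ` gends G e = {\<phi> u}} = {e \<in> gedges G. gends G e = {u}}"
    by auto
  then show ?thesis
    unfolding degree_def sub_degree_def card_edges_with[of "\<lambda>X. \<phi> u \<in> X"]
      card_edges_with[of "\<lambda>X. X = {\<phi> u}"] by simp
qed

lemma loopless_image: "loopless G \<Longrightarrow> loopless H"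
  unfolding loopless_def by (metis edge_of_image card_image inj_on_ends)

lemma independent_set_image:
  assumes "independent_set G S"
  shows "independent_set H (\<phi> ` S)"
proof -
  have S: "S \<subseteq> gverts G" using assms unfolding independent_set_def by simp
  have "adjacent G u w" if uw: "u \<in> S" "w \<in> S" "adjacent H (\<phi> u) (\<phi> w)" for u w
  proof -
    obtain d where d: "d \<in> gedges H" "\<phi> u \<in> gends H d" "\<phi> w \<in> gends H d" "\<phi> u \<noteq> \<phi> w"
      using uw(3) unfolding adjacent_def by blast
    then obtain e where e: "e \<in> gedges G" "d = \<psi> e" by (blast elim: edge_of_image)
    have "u \<in> gends G e" "w \<in> gends G e"
      using d e ends[OF e(1)] image_mem_ends_iff S uw(1,2) by auto
    with d e show ?thesis unfolding adjacent_def by auto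
  qed
  then show ?thesis
    using assms bij_verts S unfolding independent_set_def bij_betw_def by blast
qed

end

lemma mgraph_isoE:
  assumes "mgraph G" "mgraph_iso G H"
  obtains \<phi> \<psi> where "mgraph_isomorphism G H \<phi> \<psi>"
  using assms unfolding mgraph_iso_def mgraph_isomorphism_def by blast

section \<open>Orbits of two involutions\<close>

lemma orb2_self: "x \<in> orb2 p q x"
  unfolding orb2_def by simp

lemma orb2_step:
  assumes "y \<in> orb2 p q x"
  shows "p y \<in> orb2 p q x" "q y \<in> orb2 p q x"
  using assms unfolding orb2_def by (auto intro: rtrancl_into_rtrancl)

lemma orb2_least:
  assumes "x \<in> X" "\<And>y. y \<in> X \<Longrightarrow> p y \<in> X" "\<And>y. y \<in> X \<Longrightarrow> q y \<in> X"
  shows "orb2 p q x \<subseteq> X"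
proof
  fix y assume "y \<in> orb2 p q x"
  then have "(x, y) \<in> ({(u, p u) | u. True} \<union> {(u, q u) | u. True})\<^sup>*" unfolding orb2_def by simp
  then show "y \<in> X" by (induction rule: rtrancl_induct) (use assms in auto)
qed

lemma orb2_trans: "y \<in> orb2 p q x \<Longrightarrow> orb2 p q y \<subseteq> orb2 p q x"
  by (rule orb2_least) (auto intro: orb2_step)

locale involution_pair =
  fixes W :: "'w set" and p q :: "'w \<Rightarrow> 'w"
  assumes p: "\<And>x. x \<in> W \<Longrightarrow> p x \<in> W \<and> p (p x) = x"
    and q: "\<And>x. x \<in> W \<Longrightarrow> q x \<in> W \<and> q (q x) = x"
begin

lemma orb2_subset: "x \<in> W \<Longrightarrow> orb2 p q x \<subseteq> W"
  by (rule orb2_least) (use p q in auto)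

lemma orb2_sym:
  assumes "x \<in> W" "y \<in> orb2 p q x"
  shows "x \<in> orb2 p q y"
proof -
  have "orb2 p q x \<subseteq> {y \<in> W. x \<in> orb2 p q y}"
  proof (rule orb2_least)
    fix y assume y: "y \<in> {y \<in> W. x \<in> orb2 p q y}"
    have "p (p y) \<in> orb2 p q (p y)" "q (q y) \<in> orb2 p q (q y)"
      by (rule orb2_step(1)[OF orb2_self], rule orb2_step(2)[OF orb2_self])
    then have "y \<in> orb2 p q (p y)" "y \<in> orb2 p q (q y)" using p q y by auto
    then have "orb2 p q y \<subseteq> orb2 p q (p y)" "orb2 p q y \<subseteq> orb2 p q (q y)"
      by (simp_all add: orb2_trans)
    then show "p y \<in> {y \<in> W. x \<in> orb2 p q y}" "q y \<in> {y \<in> W. x \<in> orb2 p q y}"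
      using p q y by auto
  qed (use assms(1) orb2_self in auto)
  then show ?thesis using assms(2) by blast
qed

lemma orb2_eq: "x \<in> W \<Longrightarrow> y \<in> orb2 p q x \<Longrightarrow> orb2 p q y = orb2 p q x"
  by (meson orb2_subset orb2_sym orb2_trans subset_antisym subsetD)

lemma orb2_eq_iff: "x \<in> W \<Longrightarrow> y \<in> W \<Longrightarrow> orb2 p q x = orb2 p q y \<longleftrightarrow> x \<in> orb2 p q y"
  using orb2_eq orb2_self by metis

lemma orb2_p [simp]: "x \<in> W \<Longrightarrow> orb2 p q (p x) = orb2 p q x"
  using orb2_eq orb2_step(1)[OF orb2_self] by metis

lemma orb2_q [simp]: "x \<in> W \<Longrightarrow> orb2 p q (q x) = orb2 p q x"
  using orb2_eq orb2_step(2)[OF orb2_self] by metis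

lemma mem_Union_orbits_iff:
  assumes "Z \<subseteq> orb2 p q ` W" "x \<in> W"
  shows "x \<in> \<Union>Z \<longleftrightarrow> orb2 p q x \<in> Z"
proof
  assume "x \<in> \<Union>Z"
  then obtain w where "w \<in> W" "orb2 p q w \<in> Z" "x \<in> orb2 p q w" using assms(1) by auto
  then show "orb2 p q x \<in> Z" using orb2_eq by simp
next
  assume "orb2 p q x \<in> Z"
  then show "x \<in> \<Union>Z" using orb2_self by (rule UnionI)
qed

lemma Union_orbits_closed:
  assumes "Z \<subseteq> orb2 p q ` W" "x \<in> W"
  shows "p x \<in> \<Union>Z \<longleftrightarrow> x \<in> \<Union>Z" "q x \<in> \<Union>Z \<longleftrightarrow> x \<in> \<Union>Z"
  using mem_Union_orbits_iff[OF assms(1)] assms(2) p q by auto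

lemma Union_orbits_inj:
  assumes "Z \<subseteq> orb2 p q ` W" "Z' \<subseteq> orb2 p q ` W" "\<Union>Z = \<Union>Z'"
  shows "Z = Z'"
proof -
  have "C \<in> Z \<longleftrightarrow> C \<in> Z'" if "w \<in> W" "C = orb2 p q w" for w C
    using mem_Union_orbits_iff[OF assms(1) that(1)] mem_Union_orbits_iff[OF assms(2) that(1)]
      assms(3) that(2) by simp
  moreover have "\<exists>w\<in>W. C = orb2 p q w" if "C \<in> Z \<union> Z'" for C
    using that assms(1,2) by blast
  ultimately show ?thesis by blast
qed

end

section \<open>Maps\<close>

lemma is_map_dual: "is_map W v f a \<Longrightarrow> is_map W f v a"
  unfolding is_map_def by auto

lemma map_connected_dual: "map_connected W v f a \<longleftrightarrow> map_connected W f v a"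
  unfolding map_connected_def by (simp add: Un_ac)

locale combinatorial_map =
  fixes W :: "'w set" and v f a :: "'w \<Rightarrow> 'w"
  assumes is_map: "is_map W v f a"
begin

lemma finite_W: "finite W"
  using is_map unfolding is_map_def by simp

lemma
  assumes "x \<in> W"
  shows v_in: "v x \<in> W" and f_in: "f x \<in> W" and a_in: "a x \<in> W"
    and vv [simp]: "v (v x) = x" and ff [simp]: "f (f x) = x" and aa [simp]: "a (a x) = x"
    and v_neq: "v x \<noteq> x" and f_neq: "f x \<noteq> x" and a_neq: "a x \<noteq> x"
    and vf_comm: "v (f x) = f (v x)" and v_neq_f: "v x \<noteq> f x"
  using is_map assms unfolding is_map_def fpf_involution_def by auto

sublocale va: involution_pair W v a
  by unfold_locales (auto simp: v_in a_in)

sublocale vf: involution_pair W v f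
  by unfold_locales (auto simp: v_in f_in)

lemma square_eq:
  assumes "x \<in> W"
  shows "orb2 v f x = {x, v x, f x, v (f x)}"
proof
  show "{x, v x, f x, v (f x)} \<subseteq> orb2 v f x"
    using orb2_self orb2_step by (metis empty_subsetI insert_subset)
  show "orb2 v f x \<subseteq> {x, v x, f x, v (f x)}"
    by (rule orb2_least) (use assms vf_comm v_in f_in in auto)
qed

abbreviation Gm where "Gm \<equiv> map_graph W v f a"

lemma map_graph_simps:
  "gverts Gm = orb2 v a ` W" "gedges Gm = orb2 v f ` W" "gends Gm = (\<lambda>S. orb2 v a ` S)"
  unfolding map_graph_def gverts_def gedges_def gends_def cycles2_def squares_def by auto

lemma gends_square:
  assumes "x \<in> W"
  shows "gends Gm (orb2 v f x) = {orb2 v a x, orb2 v a (f x)}"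
  using assms f_in unfolding map_graph_simps square_eq[OF assms] by (auto simp: vf_comm[symmetric])

lemma mgraph_map_graph: "mgraph Gm"
proof -
  have "gends Gm q \<subseteq> gverts Gm \<and> (card (gends Gm q) = 1 \<or> card (gends Gm q) = 2)"
    if q: "q \<in> gedges Gm" for q
  proof -
    obtain x where x: "x \<in> W" "q = orb2 v f x" using q map_graph_simps(2) by auto
    show ?thesis
      unfolding x(2) gends_square[OF x(1)] using x(1) f_in[OF x(1)]
      by (cases "orb2 v a x = orb2 v a (f x)") (auto simp: map_graph_simps)
  qed
  then show ?thesis
    using finite_W by (intro mgraphI) (auto simp: map_graph_simps)
qed

section \<open>Crossed squares\<close>

definition crosses :: "'w set \<Rightarrow> 'w \<Rightarrow> bool" where
  "crosses X y \<longleftrightarrow> (y \<in> X) \<noteq> (v y \<in> X)"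

definition square_uniform :: "'w set \<Rightarrow> bool" where
  "square_uniform X \<longleftrightarrow> (\<forall>x\<in>W. crosses X (f x) \<longleftrightarrow> crosses X x)"

definition crossed_squares :: "'w set \<Rightarrow> 'w set set" where
  "crossed_squares X = {q \<in> gedges Gm. \<forall>y\<in>q. crosses X y}"

lemma crosses_v: "x \<in> W \<Longrightarrow> crosses X (v x) \<longleftrightarrow> crosses X x"
  unfolding crosses_def by auto

lemma crosses_sym_diff: "crosses (sym_diff X Y) y \<longleftrightarrow> crosses X y \<noteq> crosses Y y"
  unfolding crosses_def by auto

lemma square_uniform_sym_diff:
  "square_uniform X \<Longrightarrow> square_uniform Y \<Longrightarrow> square_uniform (sym_diff X Y)"
  unfolding square_uniform_def crosses_sym_diff by simp

lemma crosses_on_square: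
  assumes "square_uniform X" "x \<in> W" "y \<in> orb2 v f x"
  shows "crosses X y \<longleftrightarrow> crosses X x"
  using assms crosses_v f_in unfolding square_uniform_def square_eq[OF assms(2)] by auto

lemma square_in_crossed_squares_iff:
  assumes "square_uniform X" "x \<in> W"
  shows "orb2 v f x \<in> crossed_squares X \<longleftrightarrow> crosses X x"
  using crosses_on_square[OF assms] orb2_self[of x v f] assms(2)
  unfolding crossed_squares_def map_graph_simps by blast

lemma crossed_squares_sym_diff:
  assumes "square_uniform X" "square_uniform Y"
  shows "crossed_squares (sym_diff X Y) = sym_diff (crossed_squares X) (crossed_squares Y)"
proof -
  have "q \<in> crossed_squares (sym_diff X Y) \<longleftrightarrow> q \<in> sym_diff (crossed_squares X) (crossed_squares Y)"
    if "x \<in> W" "q = orb2 v f x" for q x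
    using square_in_crossed_squares_iff[OF square_uniform_sym_diff[OF assms]]
      square_in_crossed_squares_iff[OF assms(1)] square_in_crossed_squares_iff[OF assms(2)]
      crosses_sym_diff that by auto
  moreover have "crossed_squares Z \<subseteq> orb2 v f ` W" for Z
    unfolding crossed_squares_def map_graph_simps by blast
  ultimately show ?thesis by blast
qed

lemma v_closed_if_no_crossed_squares:
  assumes "square_uniform X" "crossed_squares X = {}" "x \<in> W"
  shows "v x \<in> X \<longleftrightarrow> x \<in> X"
  using square_in_crossed_squares_iff[OF assms(1,3)] assms(2) unfolding crosses_def by auto

lemma v_mem_orbit_iff: "x \<in> W \<Longrightarrow> v x \<in> orb2 v a y \<longleftrightarrow> x \<in> orb2 v a y"
  using orb2_step(1)[of x v a y] orb2_step(1)[of "v x" v a y] by auto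

lemma card_crossing_edge_in_orbit:
  assumes "x \<in> W" "crosses X x" "y \<in> W"
  shows "card ({x, v x} \<inter> X \<inter> orb2 v a y) = of_bool (orb2 v a x = orb2 v a y)"
proof -
  have "{x, v x} \<inter> X \<inter> orb2 v a y = (if x \<in> X then {x} else {v x}) \<inter> orb2 v a y"
    using assms(2) unfolding crosses_def by auto
  then show ?thesis
    using v_mem_orbit_iff[OF assms(1)] va.orb2_eq_iff[OF assms(1,3)] by auto
qed

lemma card_crossing_square_in_orbit:
  assumes "square_uniform X" "x \<in> W" "crosses X x" "y \<in> W"
  shows "card (orb2 v f x \<inter> X \<inter> orb2 v a y)
    = of_bool (orb2 v a y \<in> gends Gm (orb2 v f x)) + of_bool (gends Gm (orb2 v f x) = {orb2 v a y})"
proof -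
  have fx: "f x \<in> W" "crosses X (f x)"
    using assms f_in unfolding square_uniform_def by auto
  have "v (f x) \<noteq> x" "v (f x) \<noteq> v x"
    using v_neq_f[OF assms(2)] f_neq[OF assms(2)] vv[OF fx(1)] vv[OF assms(2)] by metis+
  then have "{x, v x} \<inter> {f x, v (f x)} = {}"
    using f_neq[OF assms(2)] v_neq_f[OF assms(2)] by auto
  then have "card (orb2 v f x \<inter> X \<inter> orb2 v a y)
      = card ({x, v x} \<inter> X \<inter> orb2 v a y) + card ({f x, v (f x)} \<inter> X \<inter> orb2 v a y)"
    unfolding square_eq[OF assms(2)] by (subst card_Un_disjoint[symmetric]) (auto intro: arg_cong[of _ _ card])
  then show ?thesis
    using card_crossing_edge_in_orbit[OF assms(2,3,4)] card_crossing_edge_in_orbit[OF fx assms(4)]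
    unfolding gends_square[OF assms(2)] by auto
qed

lemma sub_degree_crossed_squares:
  assumes "square_uniform X" "y \<in> W"
  shows "sub_degree Gm (crossed_squares X) (orb2 v a y) = card {x \<in> orb2 v a y. x \<in> X \<and> crosses X x}"
proof -
  let ?C = "orb2 v a y" and ?A = "crossed_squares X"
  have finA: "finite ?A"
    using mgraph_finite(2)[OF mgraph_map_graph] unfolding crossed_squares_def by simp
  have per_square: "card (q \<inter> X \<inter> ?C) = of_bool (?C \<in> gends Gm q) + of_bool (gends Gm q = {?C})"
    if q: "q \<in> ?A" for q
  proof -
    obtain x where x: "x \<in> W" "q = orb2 v f x"
      using q unfolding crossed_squares_def map_graph_simps by blast
    with q have "crosses X x" using square_in_crossed_squares_iff[OF assms(1)] by blast
    show ?thesis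
      unfolding x(2) by (rule card_crossing_square_in_orbit[OF assms(1) x(1) \<open>crosses X x\<close> assms(2)])
  qed
  have "{x \<in> ?C. x \<in> X \<and> crosses X x} = (\<Union>q\<in>?A. q \<inter> X \<inter> ?C)"
  proof (intro equalityI subsetI)
    fix x assume x: "x \<in> {x \<in> ?C. x \<in> X \<and> crosses X x}"
    then have "x \<in> W" using va.orb2_subset[OF assms(2)] by auto
    with x show "x \<in> (\<Union>q\<in>?A. q \<inter> X \<inter> ?C)"
      using square_in_crossed_squares_iff[OF assms(1)] orb2_self[of x v f] by blast
  qed (auto simp: crossed_squares_def)
  also have "card \<dots> = (\<Sum>q\<in>?A. card (q \<inter> X \<inter> ?C))"
  proof (rule card_UN_disjoint[OF finA])
    show "\<forall>q\<in>?A. finite (q \<inter> X \<inter> ?C)"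
      using va.orb2_subset[OF assms(2)] finite_W finite_subset by blast
    show "\<forall>q\<in>?A. \<forall>q'\<in>?A. q \<noteq> q' \<longrightarrow> q \<inter> X \<inter> ?C \<inter> (q' \<inter> X \<inter> ?C) = {}"
      unfolding crossed_squares_def map_graph_simps using vf.orb2_eq by blast
  qed
  also have "\<dots> = (\<Sum>q\<in>?A. of_bool (?C \<in> gends Gm q) + of_bool (gends Gm q = {?C}))"
    using per_square by simp
  also have "\<dots> = sub_degree Gm ?A ?C"
    unfolding sub_degree_def card_filter_eq_sum[OF finA] by (simp only: sum.distrib)
  finally show ?thesis ..
qed

lemma even_card_crossing_in_orbit:
  assumes "\<forall>x\<in>W. a x \<in> X \<longleftrightarrow> x \<in> X" "y \<in> W"
  shows "even (card {x \<in> orb2 v a y. x \<in> X \<and> crosses X x})"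
proof -
  let ?C = "orb2 v a y"
  have C: "?C \<subseteq> W" "finite ?C" using va.orb2_subset[OF assms(2)] finite_W finite_subset by auto
  let ?In = "{x \<in> ?C. x \<in> X}" and ?Both = "{x \<in> ?C. x \<in> X \<and> v x \<in> X}"
  have "even (card ?In)"
    by (rule even_card_involution[where h = a]) (use C assms(1) orb2_step(2) a_neq in auto)
  moreover have "even (card ?Both)"
    by (rule even_card_involution[where h = v]) (use C orb2_step(1) v_neq in auto)
  moreover have "{x \<in> ?C. x \<in> X \<and> crosses X x} = ?In - ?Both"
    unfolding crosses_def by auto
  moreover have "card (?In - ?Both) = card ?In - card ?Both"
    using C by (intro card_Diff_subset) auto
  ultimately show ?thesis by (simp add: dvd_diff_nat)
qed

text \<open>The degree of the crossed squares at a \<open>(v, a)\<close>-cycle counts the crossing flags of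
  the cycle lying in \<open>X\<close>; the flags in \<open>X\<close> pair up under \<open>a\<close>, the non-crossing ones
  among them under \<open>v\<close>.\<close>
lemma crossed_squares_in_cycle_space:
  assumes "\<forall>x\<in>W. a x \<in> X \<longleftrightarrow> x \<in> X" "square_uniform X"
  shows "crossed_squares X \<in> cycle_space Gm"
  using sub_degree_crossed_squares[OF assms(2)] even_card_crossing_in_orbit[OF assms(1)]
  unfolding cycle_space_def map_graph_simps(1) crossed_squares_def by auto

section \<open>The planar bound\<close>

lemma map_connected_closed:
  assumes "map_connected W v f a" "X \<subseteq> W" "x \<in> X"
    and "\<And>y. y \<in> X \<Longrightarrow> v y \<in> X" "\<And>y. y \<in> X \<Longrightarrow> f y \<in> X" "\<And>y. y \<in> X \<Longrightarrow> a y \<in> X"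
  shows "X = W"
proof -
  have "y \<in> X" if "y \<in> W" for y
  proof -
    have "(x, y) \<in> ({(u, v u) | u. True} \<union> {(u, f u) | u. True} \<union> {(u, a u) | u. True})\<^sup>*"
      using assms(1-3) that unfolding map_connected_def by auto
    then show ?thesis by (induction rule: rtrancl_induct) (use assms(3-6) in auto)
  qed
  with assms(2) show ?thesis by blast
qed

lemma gconnected_map_graph:
  assumes "map_connected W v f a"
  shows "gconnected Gm"
proof -
  let ?R = "{(C, C'). adjacent Gm C C'}"
  have "y \<in> W \<and> (orb2 v a x, orb2 v a y) \<in> ?R\<^sup>*" if "x \<in> W" "y \<in> W" for x y
  proof -
    have "(x, y) \<in> ({(u, v u) | u. True} \<union> {(u, f u) | u. True} \<union> {(u, a u) | u. True})\<^sup>*"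
      using assms that unfolding map_connected_def by auto
    then show ?thesis
    proof (induction rule: rtrancl_induct)
      case (step y y')
      then have y: "y \<in> W" and path: "(orb2 v a x, orb2 v a y) \<in> ?R\<^sup>*" by auto
      consider "y' = v y" | "y' = a y" | "y' = f y" using step(2) by auto
      then show ?case
      proof cases
        case 3
        show ?thesis
        proof (cases "orb2 v a y = orb2 v a y'")
          case False
          have "orb2 v f y \<in> gedges Gm" using y by (simp add: map_graph_simps)
          with False have "adjacent Gm (orb2 v a y) (orb2 v a y')"
            unfolding adjacent_def using gends_square[OF y] 3 by auto
          then show ?thesis using path y 3 f_in by (auto intro: rtrancl_into_rtrancl)
        qed (use path y 3 f_in in auto)
      qed (use path y v_in a_in in auto)
    qed (use that in simp)
  qed
  then show ?thesis
    using assms unfolding gconnected_def map_graph_simps map_connected_def by auto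
qed

lemma diag_in: "x \<in> W \<Longrightarrow> diag v f x \<in> W"
  unfolding diag_def by (simp add: v_in f_in)

lemma diag_diag: "x \<in> W \<Longrightarrow> diag v f (diag v f x) = x"
proof -
  assume x: "x \<in> W"
  have "v (f (v (f x))) = v (f (f (v x)))" using vf_comm[OF x] by simp
  also have "\<dots> = x" using ff[OF v_in[OF x]] vv[OF x] by simp
  finally show ?thesis unfolding diag_def .
qed

end

sublocale combinatorial_map \<subseteq> dual: combinatorial_map W f v a
  by unfold_locales (rule is_map_dual[OF is_map])

sublocale combinatorial_map \<subseteq> zigzags: involution_pair W "diag v f" a
  by unfold_locales (simp_all add: diag_in diag_diag a_in)

context combinatorial_map
begin

lemma square_dual: "orb2 f v x = orb2 v f x"
  unfolding orb2_def by (simp add: Un_commute)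

lemma gedges_dual: "gedges dual.Gm = gedges Gm"
  unfolding map_graph_simps dual.map_graph_simps square_dual ..

lemma diag_v: "x \<in> W \<Longrightarrow> diag v f (v x) = f x"
  and diag_f: "x \<in> W \<Longrightarrow> diag v f (f x) = v x"
  unfolding diag_def by (simp_all add: vf_comm f_in v_in)

definition zigzag_closed :: "'w set \<Rightarrow> bool" where
  "zigzag_closed X \<longleftrightarrow> X \<subseteq> W \<and> (\<forall>x\<in>W. diag v f x \<in> X \<longleftrightarrow> x \<in> X) \<and> (\<forall>x\<in>W. a x \<in> X \<longleftrightarrow> x \<in> X)"

lemma zigzag_closed_Union:
  assumes "Z \<subseteq> orb2 (diag v f) a ` W"
  shows "zigzag_closed (\<Union>Z)"
proof -
  have "\<Union>Z \<subseteq> W"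
  proof
    fix y assume "y \<in> \<Union>Z"
    then obtain w where "w \<in> W" "y \<in> orb2 (diag v f) a w" using assms by blast
    then show "y \<in> W" using zigzags.orb2_subset by blast
  qed
  then show ?thesis unfolding zigzag_closed_def using zigzags.Union_orbits_closed[OF assms] by simp
qed

lemma zigzag_closed_sym_diff: "zigzag_closed X \<Longrightarrow> zigzag_closed Y \<Longrightarrow> zigzag_closed (sym_diff X Y)"
  unfolding zigzag_closed_def by auto

text \<open>Since \<open>v\<close> and \<open>f\<close> differ by the zigzag matching, a zigzag-closed set crosses
  the \<open>v\<close>-edge and the \<open>f\<close>-edge at every flag alike.\<close>
lemma zigzag_closed_crosses_dual:
  assumes "zigzag_closed X" "x \<in> W"
  shows "dual.crosses X x \<longleftrightarrow> crosses X x"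
  using assms diag_v[OF assms(2)] v_in[OF assms(2)]
  unfolding zigzag_closed_def crosses_def dual.crosses_def by metis

lemma zigzag_closed_square_uniform:
  assumes "zigzag_closed X"
  shows "square_uniform X" "dual.square_uniform X"
proof -
  have "crosses X (f x) \<longleftrightarrow> crosses X x" if "x \<in> W" for x
    using assms diag_f[OF that] f_in[OF that] that unfolding zigzag_closed_def crosses_def diag_def
    by metis
  then show "square_uniform X" unfolding square_uniform_def by simp
  then show "dual.square_uniform X"
    unfolding square_uniform_def dual.square_uniform_def
    using zigzag_closed_crosses_dual[OF assms] v_in f_in crosses_v dual.crosses_v by metis
qed

lemma zigzag_closed_crossed_squares_dual:
  assumes "zigzag_closed X"
  shows "dual.crossed_squares X = crossed_squares X"
proof -
  have "q \<subseteq> W" if "q \<in> gedges Gm" for q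
    using that vf.orb2_subset unfolding map_graph_simps by auto
  then show ?thesis
    unfolding crossed_squares_def dual.crossed_squares_def gedges_dual
    using zigzag_closed_crosses_dual[OF assms] by blast
qed

lemma zigzag_closed_without_crossed_squares:
  assumes "map_connected W v f a" "zigzag_closed X" "crossed_squares X = {}"
  shows "X = {} \<or> X = W"
proof (cases "X = {}")
  case False
  then obtain x where "x \<in> X" by blast
  have v_closed: "v y \<in> X" if "y \<in> X" for y
    using v_closed_if_no_crossed_squares[OF zigzag_closed_square_uniform(1)[OF assms(2)] assms(3)]
      that assms(2) unfolding zigzag_closed_def by blast
  moreover have "f y \<in> X" if "y \<in> X" for y
    using v_closed[OF that] assms(2) diag_v[of y] that unfolding zigzag_closed_def by (metis subsetD)
  moreover have "a y \<in> X" if "y \<in> X" for y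
    using assms(2) that unfolding zigzag_closed_def by blast
  ultimately have "X = W"
    using map_connected_closed[OF assms(1) _ \<open>x \<in> X\<close>] assms(2) unfolding zigzag_closed_def by blast
  then show ?thesis ..
qed simp

lemma Union_vertices_closed:
  assumes "U \<subseteq> gverts Gm"
  shows "\<forall>x\<in>W. a x \<in> \<Union>U \<longleftrightarrow> x \<in> \<Union>U" "dual.square_uniform (\<Union>U)"
proof -
  note closed = va.Union_orbits_closed[OF assms[unfolded map_graph_simps]]
  show "\<forall>x\<in>W. a x \<in> \<Union>U \<longleftrightarrow> x \<in> \<Union>U" using closed by blast
  show "dual.square_uniform (\<Union>U)"
    unfolding dual.square_uniform_def dual.crosses_def
    using closed f_in v_in vf_comm by metis
qed

text \<open>The ends of a square are the \<open>(v, a)\<close>-cycles through the two ends of each of its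
  \<open>f\<close>-edges.\<close>
lemma coboundary_eq_dual_crossed_squares:
  assumes "U \<subseteq> gverts Gm"
  shows "coboundary Gm U = dual.crossed_squares (\<Union>U)"
proof -
  have U: "U \<subseteq> orb2 v a ` W" using assms unfolding map_graph_simps .
  have "q \<in> coboundary Gm U \<longleftrightarrow> q \<in> dual.crossed_squares (\<Union>U)" if x: "x \<in> W" "q = orb2 v f x" for q x
  proof -
    have "orb2 v f x \<in> gedges Gm" using x(1) by (simp add: map_graph_simps)
    then have "q \<in> coboundary Gm U \<longleftrightarrow> (orb2 v a x \<in> U) \<noteq> (orb2 v a (f x) \<in> U)"
      unfolding x(2) coboundary_def using gends_square[OF x(1)] by auto
    also have "\<dots> \<longleftrightarrow> dual.crosses (\<Union>U) x"
      unfolding dual.crosses_def using va.mem_Union_orbits_iff[OF U] x(1) f_in by simp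
    also have "\<dots> \<longleftrightarrow> q \<in> dual.crossed_squares (\<Union>U)"
      using dual.square_in_crossed_squares_iff[OF Union_vertices_closed(2)[OF assms] x(1)]
      unfolding x(2) square_dual by simp
    finally show ?thesis .
  qed
  moreover have "coboundary Gm U \<subseteq> orb2 v f ` W" "dual.crossed_squares (\<Union>U) \<subseteq> orb2 v f ` W"
    using coboundary_subset_edges[of Gm U] gedges_dual
    unfolding dual.crossed_squares_def map_graph_simps by auto
  ultimately show ?thesis by blast
qed

lemma zigzag_family_determined:
  assumes "map_connected W v f a" "w \<in> W"
    and Z: "Z \<subseteq> orb2 (diag v f) a ` W - {orb2 (diag v f) a w}"
    and Z': "Z' \<subseteq> orb2 (diag v f) a ` W - {orb2 (diag v f) a w}"
    and "crossed_squares (sym_diff (\<Union>Z) (\<Union>Z')) = {}"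
  shows "Z = Z'"
proof -
  have orbits: "Z \<subseteq> orb2 (diag v f) a ` W" "Z' \<subseteq> orb2 (diag v f) a ` W" using Z Z' by auto
  have "w \<notin> sym_diff (\<Union>Z) (\<Union>Z')"
    using zigzags.mem_Union_orbits_iff[OF orbits(1) assms(2)]
      zigzags.mem_Union_orbits_iff[OF orbits(2) assms(2)] Z Z' by auto
  moreover have "zigzag_closed (sym_diff (\<Union>Z) (\<Union>Z'))"
    using zigzag_closed_sym_diff zigzag_closed_Union orbits by blast
  ultimately have "sym_diff (\<Union>Z) (\<Union>Z') = {}"
    using zigzag_closed_without_crossed_squares[OF assms(1) _ assms(5)] assms(2) by blast
  then have "\<Union>Z = \<Union>Z'" by blast
  then show ?thesis using zigzags.Union_orbits_inj[OF orbits] by blast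
qed

lemma zigzag_coboundary_sums_inj:
  assumes "map_connected W v f a" "independent_set Gm S" "loopless Gm" "\<forall>u\<in>S. odd (degree Gm u)"
    and "w \<in> W" "U \<subseteq> S" "U' \<subseteq> S"
    and Z: "Z \<subseteq> orb2 (diag v f) a ` W - {orb2 (diag v f) a w}"
    and Z': "Z' \<subseteq> orb2 (diag v f) a ` W - {orb2 (diag v f) a w}"
    and eq: "sym_diff (crossed_squares (\<Union>Z)) (coboundary Gm U)
      = sym_diff (crossed_squares (\<Union>Z')) (coboundary Gm U')"
  shows "Z = Z'" "U = U'"
proof -
  let ?X = "sym_diff (\<Union>Z) (\<Union>Z')"
  have zc: "zigzag_closed (\<Union>Z)" "zigzag_closed (\<Union>Z')"
    using Z Z' by (auto intro!: zigzag_closed_Union)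
  then have zcX: "zigzag_closed ?X" by (rule zigzag_closed_sym_diff)
  have "sym_diff (crossed_squares (\<Union>Z)) (crossed_squares (\<Union>Z'))
      = sym_diff (coboundary Gm U) (coboundary Gm U')"
    using eq by (rule sym_diff_swap)
  then have cob: "crossed_squares ?X = coboundary Gm (sym_diff U U')"
    using crossed_squares_sym_diff zigzag_closed_square_uniform(1) zc
      coboundary_sym_diff[OF mgraph_map_graph] by metis
  have "crossed_squares ?X \<in> cycle_space Gm"
    using crossed_squares_in_cycle_space zigzag_closed_square_uniform(1)[OF zcX] zcX
    unfolding zigzag_closed_def by blast
  then have "coboundary Gm (sym_diff U U') \<in> cycle_space Gm" unfolding cob .
  moreover have "sym_diff U U' \<subseteq> S" using assms(6,7) by blast
  ultimately have "sym_diff U U' = {}"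
    by (intro coboundary_odd_independent_in_cycle_space[OF assms(3,2,4)])
  then show "U = U'" by blast
  show "Z = Z'"
    using zigzag_family_determined[OF assms(1,5) Z Z'] cob \<open>sym_diff U U' = {}\<close> by simp
qed

lemma card_cycle_space_dual_ge:
  assumes "map_connected W v f a" "independent_set Gm S" "loopless Gm" "\<forall>u\<in>S. odd (degree Gm u)"
  shows "2 ^ (card (orb2 (diag v f) a ` W) - 1 + card S) \<le> card (cycle_space dual.Gm)"
proof -
  obtain w where w: "w \<in> W" using assms(1) unfolding map_connected_def by auto
  let ?Zs = "orb2 (diag v f) a ` W - {orb2 (diag v f) a w}"
  have S: "S \<subseteq> gverts Gm" "finite S"
    using assms(2) mgraph_finite(1)[OF mgraph_map_graph] finite_subset
    unfolding independent_set_def by auto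
  define F where "F = (\<lambda>(Z, U). sym_diff (crossed_squares (\<Union>Z)) (coboundary Gm U))"
  have F_cycle: "F (Z, U) \<in> cycle_space dual.Gm" if "Z \<subseteq> ?Zs" "U \<subseteq> S" for Z U
  proof -
    have zc: "zigzag_closed (\<Union>Z)" using that(1) by (intro zigzag_closed_Union) blast
    have "crossed_squares (\<Union>Z) \<in> cycle_space dual.Gm"
      using dual.crossed_squares_in_cycle_space zigzag_closed_square_uniform(2)
        zigzag_closed_crossed_squares_dual zc unfolding zigzag_closed_def by metis
    moreover have "coboundary Gm U \<in> cycle_space dual.Gm"
      using dual.crossed_squares_in_cycle_space[OF Union_vertices_closed[of U]]
        coboundary_eq_dual_crossed_squares[of U] that(2) S(1) by auto
    ultimately show ?thesis
      unfolding F_def using sym_diff_in_cycle_space[OF dual.mgraph_map_graph] by simp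
  qed
  have F_inj: "inj_on F (Pow ?Zs \<times> Pow S)"
  proof (rule inj_onI, clarify)
    fix Z U Z' U' assume Z: "Z \<subseteq> ?Zs" "Z' \<subseteq> ?Zs" and U: "U \<subseteq> S" "U' \<subseteq> S"
      and "F (Z, U) = F (Z', U')"
    then have "sym_diff (crossed_squares (\<Union>Z)) (coboundary Gm U)
        = sym_diff (crossed_squares (\<Union>Z')) (coboundary Gm U')"
      unfolding F_def by simp
    then show "Z = Z' \<and> U = U'" using zigzag_coboundary_sums_inj[OF assms w U Z] by blast
  qed
  have "2 ^ (card (orb2 (diag v f) a ` W) - 1 + card S) = card (Pow ?Zs \<times> Pow S)"
    using finite_W w S(2) by (simp add: card_cartesian_product card_Pow power_add)
  also have "\<dots> = card (F ` (Pow ?Zs \<times> Pow S))" using card_image[OF F_inj] by simp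
  also have "\<dots> \<le> card (cycle_space dual.Gm)"
    using F_cycle by (intro card_mono[OF finite_cycle_space[OF dual.mgraph_map_graph]]) auto
  finally show ?thesis .
qed

lemma planar_independent_set_bound:
  assumes "map_connected W v f a" "euler_char W v f a = 2"
    and "independent_set Gm S" "loopless Gm" "\<forall>u\<in>S. odd (degree Gm u)"
  shows "card S + zigzag_count W v f a \<le> card (gverts Gm)"
proof -
  have W: "W \<noteq> {}" using assms(1) unfolding map_connected_def by simp
  let ?z = "card (orb2 (diag v f) a ` W)" and ?F = "card (gverts dual.Gm)"
  have "2 ^ (?z - 1 + card S) \<le> card (cycle_space dual.Gm)"
    by (rule card_cycle_space_dual_ge[OF assms(1,3-5)])
  also have "\<dots> \<le> 2 ^ (card (gedges Gm) - (?F - 1))"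
    using card_cycle_space_le[OF dual.mgraph_map_graph dual.gconnected_map_graph]
      map_connected_dual[THEN iffD1, OF assms(1)]
    unfolding gedges_dual by simp
  finally have "?z - 1 + card S \<le> card (gedges Gm) - (?F - 1)" by simp
  moreover have "int (card (gverts Gm)) - int (card (gedges Gm)) + int ?F = 2"
    using assms(2) unfolding euler_char_def squares_def cycles2_def map_graph_simps dual.map_graph_simps .
  moreover have "?z \<noteq> 0" "?F \<noteq> 0" "card (gverts Gm) \<noteq> 0"
    using W finite_W unfolding map_graph_simps dual.map_graph_simps by simp_all
  ultimately show ?thesis unfolding zigzag_count_def cycles2_def by linarith
qed

lemma planar_independence_number_bound:
  assumes "map_connected W v f a" "euler_char W v f a = 2"
    and "mgraph G" "mgraph_iso G Gm" "loopless G" "\<forall>u\<in>gverts G. odd (degree G u)"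
  shows "independence_number G + zigzag_count W v f a \<le> card (gverts G)"
proof -
  obtain \<phi> \<psi> where "mgraph_isomorphism G Gm \<phi> \<psi>" using mgraph_isoE[OF assms(3,4)] .
  then interpret iso: mgraph_isomorphism G Gm \<phi> \<psi> .
  obtain S where S: "independent_set G S" "card S = independence_number G"
    using maximum_independent_set_exists[OF assms(3)] .
  then have SV: "S \<subseteq> gverts G" unfolding independent_set_def by simp
  have "\<forall>u\<in>\<phi> ` S. odd (degree Gm u)" using iso.degree_image assms(6) SV by auto
  then have "card (\<phi> ` S) + zigzag_count W v f a \<le> card (gverts Gm)"
    by (rule planar_independent_set_bound[OF assms(1,2) iso.independent_set_image[OF S(1)]
        iso.loopless_image[OF assms(5)]])
  moreover have "card (\<phi> ` S) = card S" using card_image iso.inj_on_verts SV inj_on_subset by blast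
  moreover have "card (gverts Gm) = card (gverts G)" using iso.bij_verts bij_betw_same_card by metis
  ultimately show ?thesis using S(2) by simp
qed

end

theorem theorem2p14:
  fixes G :: "('v,'e) mgraph"
  assumes "mgraph G"
    and "gconnected G"
    and "map_rich G"
    and "loopless G"
    and "\<forall>u\<in>gverts G. odd (degree G u)"
  shows "int (independence_number G)
           \<le> int (card (gverts G)) - 1 - int (gf2_dim (bicycle_space G))
         \<and> (\<forall>(W::nat set) v f a. planar_map W v f a \<and> mgraph_iso G (map_graph W v f a) \<longrightarrow>
           int (independence_number G) \<le> int (card (gverts G)) - int (zigzag_count W v f a))"
proof (intro conjI allI impI; (elim conjE)?)
  \<comment> \<open>Neither bound needs \<open>G\<close> to be map-rich.\<close>
  have "gverts G \<noteq> {}" using assms(2) unfolding gconnected_def by simp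
  then show "int (independence_number G) \<le> int (card (gverts G)) - 1 - int (gf2_dim (bicycle_space G))"
    using independence_number_bicycle_bound[OF assms(1) _ assms(4,5)] by linarith
next
  fix W :: "nat set" and v f a
  assume planar: "planar_map W v f a" and iso: "mgraph_iso G (map_graph W v f a)"
  then interpret combinatorial_map W v f a
    unfolding planar_map_def combinatorial_map_def by simp
  show "int (independence_number G) \<le> int (card (gverts G)) - int (zigzag_count W v f a)"
    using planar_independence_number_bound[OF _ _ assms(1) iso assms(4,5)] planar
    unfolding planar_map_def by linarith
qed

end
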